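(* Let $\alpha\in\mathbb{K}((t^{-1}))$ with $a_0(\alpha)=0$, and run the algorithm described in the context. Then: (1) All the partial quotients required by the algorithm exist, so $\beta$ and $\gamma$ are well defined, and $\alpha=\beta+\gamma$. Moreover, for every $n\ge1$: if $b_n$ is defined then $c_i=a_i(\alpha-[0;b_1,\dots,b_n])$ for every $1\le i\le n-1$; and if $c_n$ is defined then $b_i=a_i(\alpha-[0;c_1,\dots,c_n])$ and $c_i=a_i(\alpha-[0;b_1,\dots,b_n])$ for every $1\le i\le n$. (2) If $c_1$ is defined then $\deg c_1\ge 2\deg b_1+1$; and for every $n\ge2$, if $b_n$ is defined then $\deg b_n\ge\deg c_{n-1}+2$, and if $c_n$ is defined then $\deg c_n\ge \deg b_n+2$. (3) If $\alpha=p/q$ is a rational function ($p,q\in\mathbb{K}[t]$, $q\neq 0$), then the algorithm stops after at most $\deg(q)/2$ steps; in particular $\beta,\gamma\in\mathbb{K}(t)$.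
   Context: $\mathbb{K}((t^{-1}))$ is the field of formal Laurent series over a field $\mathbb{K}$, with $\deg\alpha=\sup\{-n:\alpha_n\ne0\}$ for $\alpha=\sum\alpha_nt^{-n}$. Every $\alpha$ has a unique continued fraction expansion $[a_0;a_1,a_2,\dots]$ with $a_n\in\mathbb{K}[t]$, $\deg a_n\ge1$ for $n\ge1$, finite iff $\alpha\in\mathbb{K}(t)$; $a_n(\alpha)$ denotes its $n$-th partial quotient. For polynomials $b_1,\dots,b_n$ of degree $\ge1$, $[0;b_1,\dots,b_n]$ is the finite continued fraction (equal to $0$ if $n=0$). Algorithm (Laurent analogue of Shulga's algorithm): given $\alpha$ with $a_0(\alpha)=0$, for $n=0,1,2,\dots$, with $b_1,\dots,b_n,c_1,\dots,c_n$ already defined: if $\alpha=[0;b_1,\dots,b_n]+[0;c_1,\dots,c_n]$, set $\beta=[0;b_1,\dots,b_n]$, $\gamma=[0;c_1,\dots,c_n]$ and stop. Otherwise set $b_{n+1}=a_{n+1}(\alpha-[0;c_1,\dots,c_n])$. If then $\alpha=[0;b_1,\dots,b_{n+1}]+[0;c_1,\dots,c_n]$, set $\beta=[0;b_1,\dots,b_{n+1}]$, $\gamma=[0;c_1,\dots,c_n]$ and stop. Otherwise set $c_{n+1}=a_{n+1}(\alpha-[0;b_1,\dots,b_{n+1}])$ and continue. If the algorithm never stops, set $\beta=[0;b_1,b_2,\dots]$ and $\gamma=[0;c_1,c_2,\dots]$. *)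

theory Defs
  imports "HOL-Computational_Algebra.Formal_Laurent_Series"
begin

text \<open>We model K((t^-1)) as the formal Laurent series 'a fls in the variable X = t^-1
  (finitely many negative powers of X = finitely many positive powers of t).
  Then deg alpha = - fls_subdegree alpha, and the library metric on fls is the
  usual (t^-1)-adic metric.\<close>

definition poly_fls :: "'a::field poly \<Rightarrow> 'a fls" where
  "poly_fls p = poly (map_poly fls_const p) fls_X_inv"

text \<open>Polynomial part (in t) of a Laurent series: the terms of degree >= 0 in t.\<close>
definition fls_polypart :: "'a::field fls \<Rightarrow> 'a poly" where
  "fls_polypart f = fls_prpart f + [:fls_nth f 0:]"

text \<open>Complete quotients of the continued fraction expansion; None = the expansion
  has already terminated.\<close>
fun cf_rem :: "'a::field fls \<Rightarrow> nat \<Rightarrow> 'a fls option" where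
  "cf_rem \<alpha> 0 = Some \<alpha>"
| "cf_rem \<alpha> (Suc n) = (case cf_rem \<alpha> n of None \<Rightarrow> None
     | Some r \<Rightarrow> (let s = r - poly_fls (fls_polypart r) in
                    if s = 0 then None else Some (inverse s)))"

definition cfq :: "'a::field fls \<Rightarrow> nat \<Rightarrow> 'a poly option" where
  "cfq \<alpha> n = map_option fls_polypart (cf_rem \<alpha> n)"

fun cfv :: "'a::field poly list \<Rightarrow> 'a fls" where
  "cfv [] = 0"
| "cfv (b # bs) = inverse (poly_fls b + cfv bs)"

text \<open>State of the algorithm: running with lists b_1..b_n, c_1..c_n; stopped with
  the final lists; or failed because a required partial quotient does not exist.\<close>
datatype 'p sstate = Run "'p list" "'p list" | Stop "'p list" "'p list" | Fail

fun sstep :: "'a::field fls \<Rightarrow> 'a poly sstate \<Rightarrow> 'a poly sstate" where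
  "sstep \<alpha> (Run bs cs) =
    (if \<alpha> = cfv bs + cfv cs then Stop bs cs
     else (case cfq (\<alpha> - cfv cs) (Suc (length bs)) of
             None \<Rightarrow> Fail
           | Some b \<Rightarrow>
               (if \<alpha> = cfv (bs @ [b]) + cfv cs then Stop (bs @ [b]) cs
                else (case cfq (\<alpha> - cfv (bs @ [b])) (Suc (length bs)) of
                        None \<Rightarrow> Fail
                      | Some c \<Rightarrow> Run (bs @ [b]) (cs @ [c])))))"
| "sstep \<alpha> (Stop bs cs) = Stop bs cs"
| "sstep \<alpha> Fail = Fail"

definition sh_state :: "'a::field fls \<Rightarrow> nat \<Rightarrow> 'a poly sstate" where
  "sh_state \<alpha> k = (sstep \<alpha> ^^ k) (Run [] [])"

definition sh_stops :: "'a::field fls \<Rightarrow> bool" where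
  "sh_stops \<alpha> = (\<exists>k bs cs. sh_state \<alpha> k = Stop bs cs)"

fun st_bs :: "'p sstate \<Rightarrow> 'p list" where
  "st_bs (Run bs cs) = bs" | "st_bs (Stop bs cs) = bs" | "st_bs Fail = []"

fun st_cs :: "'p sstate \<Rightarrow> 'p list" where
  "st_cs (Run bs cs) = cs" | "st_cs (Stop bs cs) = cs" | "st_cs Fail = []"

definition b_defined :: "'a::field fls \<Rightarrow> nat \<Rightarrow> bool" where
  "b_defined \<alpha> n = (\<exists>k. n \<le> length (st_bs (sh_state \<alpha> k)))"

definition c_defined :: "'a::field fls \<Rightarrow> nat \<Rightarrow> bool" where
  "c_defined \<alpha> n = (\<exists>k. n \<le> length (st_cs (sh_state \<alpha> k)))"

definition sh_b :: "'a::field fls \<Rightarrow> nat \<Rightarrow> 'a poly" where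
  "sh_b \<alpha> n = st_bs (sh_state \<alpha> (LEAST k. n \<le> length (st_bs (sh_state \<alpha> k)))) ! (n - 1)"

definition sh_c :: "'a::field fls \<Rightarrow> nat \<Rightarrow> 'a poly" where
  "sh_c \<alpha> n = st_cs (sh_state \<alpha> (LEAST k. n \<le> length (st_cs (sh_state \<alpha> k)))) ! (n - 1)"

definition sh_bcf :: "'a::field fls \<Rightarrow> nat \<Rightarrow> 'a fls" where
  "sh_bcf \<alpha> n = cfv (map (sh_b \<alpha>) [1..<Suc n])"

definition sh_ccf :: "'a::field fls \<Rightarrow> nat \<Rightarrow> 'a fls" where
  "sh_ccf \<alpha> n = cfv (map (sh_c \<alpha>) [1..<Suc n])"

definition sh_beta :: "'a::field fls \<Rightarrow> 'a fls" where
  "sh_beta \<alpha> = (if sh_stops \<alpha>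
      then cfv (st_bs (sh_state \<alpha> (SOME k. \<exists>bs cs. sh_state \<alpha> k = Stop bs cs)))
      else lim (sh_bcf \<alpha>))"

definition sh_gamma :: "'a::field fls \<Rightarrow> 'a fls" where
  "sh_gamma \<alpha> = (if sh_stops \<alpha>
      then cfv (st_cs (sh_state \<alpha> (SOME k. \<exists>bs cs. sh_state \<alpha> k = Stop bs cs)))
      else lim (sh_ccf \<alpha>))"

definition is_ratfun :: "'a::field fls \<Rightarrow> bool" where
  "is_ratfun x = (\<exists>p q. q \<noteq> 0 \<and> x = poly_fls p / poly_fls q)"

end

(* Write beta_n = [0; b_1, ..., b_n] and gamma_n = [0; c_1, ..., c_n].  For x of negative degree,
   Legendre's criterion characterises initial segments of the expansion: bs = [a_1(x), ..., a_m(x)]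
   iff x = [0; bs] or deg (x - [0; bs]) < -2 (deg b_1 + ... + deg b_m), and if a_(m+1)(x) exists
   the error has degree exactly -(2 (deg b_1 + ... + deg b_m) + deg a_(m+1)(x)).  Computing
   deg (alpha - beta_n - gamma_n) once from the expansion of alpha - gamma_n and once from that of
   alpha - beta_n ties the degree of each new partial quotient to the gap
   D_n = 2 (sum deg c_i - sum deg b_i).  By induction D_n grows by at least 4 per iteration; this
   makes every new approximation good enough for Legendre's criterion to transfer the expansions,
   and yields the degree inequalities.  If alpha = p/q, then alpha - beta_n - gamma_(n-1) times
   q den(beta_n) den(gamma_(n-1)) is a nonzero polynomial, which bounds the degree of the error from
   below and forces D_n <= 2 deg q, hence 2n <= deg q.  If the algorithm runs forever, the
   convergents agree with their limits to increasing order. *)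

theory Submission
  imports Defs "HOL-Library.Sublist"
begin

unbundle fps_syntax

lemma poly_fls_pCons: "poly_fls (pCons a p) = fls_const a + fls_X_inv * poly_fls p"
  unfolding poly_fls_def by (simp add: map_poly_pCons)

lemma poly_fls_0 [simp]: "poly_fls 0 = 0"
  unfolding poly_fls_def by simp

lemma fls_nth_poly_fls: "poly_fls p $$ k = (if k \<le> 0 then coeff p (nat (- k)) else 0)"
proof (induction p arbitrary: k)
  case (pCons a p)
  show ?case
  proof (cases "k = 0")
    case True
    then show ?thesis using pCons(2)[of 1] by (simp add: poly_fls_pCons fls_X_inv_times_conv_shift)
  next
    case False
    have "nat (- k) = Suc (nat (- (k + 1)))" if "k < 0" using that by simp
    then show ?thesis using False pCons(2)[of "k + 1"]
      by (auto simp: poly_fls_pCons fls_X_inv_times_conv_shift)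
  qed
qed simp

lemma poly_fls_add: "poly_fls (p + q) = poly_fls p + poly_fls q"
  by (intro fls_eqI) (simp add: fls_nth_poly_fls)

lemma poly_fls_diff: "poly_fls (p - q) = poly_fls p - poly_fls q"
  by (intro fls_eqI) (simp add: fls_nth_poly_fls)

lemma poly_fls_smult: "poly_fls (smult a p) = fls_const a * poly_fls p"
  by (intro fls_eqI) (simp add: fls_nth_poly_fls)

lemma poly_fls_mult: "poly_fls (p * q) = poly_fls p * poly_fls q"
  by (induction p) (simp_all add: poly_fls_pCons poly_fls_add poly_fls_smult algebra_simps)

lemma poly_fls_eq_0_iff [simp]: "poly_fls p = 0 \<longleftrightarrow> p = 0"
proof
  assume "poly_fls p = 0"
  then have "coeff p n = 0" for n using fls_nth_poly_fls[of p "- int n"] by simp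
  then show "p = 0" by (intro poly_eqI) simp
qed simp

lemma fls_subdegree_poly_fls: "p \<noteq> 0 \<Longrightarrow> fls_subdegree (poly_fls p) = - int (degree p)"
  by (rule fls_subdegree_eqI) (auto simp: fls_nth_poly_fls coeff_eq_0)

lemma coeff_fls_polypart: "coeff (fls_polypart f) n = f $$ (- int n)"
  unfolding fls_polypart_def by (cases n) auto

lemma fls_polypart_diff: "fls_polypart (x - y) = fls_polypart x - fls_polypart y"
  by (intro poly_eqI) (simp add: coeff_fls_polypart)

lemma fls_polypart_poly_fls [simp]: "fls_polypart (poly_fls p) = p"
  by (intro poly_eqI) (simp add: coeff_fls_polypart fls_nth_poly_fls)

lemma degree_fls_polypart:
  assumes "z \<noteq> 0" "fls_subdegree z \<le> 0"
  shows "int (degree (fls_polypart z)) = - fls_subdegree z"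
proof -
  let ?n = "nat (- fls_subdegree z)"
  have "coeff (fls_polypart z) ?n \<noteq> 0" using assms by (simp add: coeff_fls_polypart)
  then have "?n \<le> degree (fls_polypart z)" by (rule le_degree)
  moreover have "degree (fls_polypart z) \<le> ?n"
    by (rule degree_le) (auto simp: coeff_fls_polypart)
  ultimately show ?thesis using assms by simp
qed

text \<open>The series of negative degree in \<open>t\<close>.\<close>

definition fls_small :: "'a::field fls \<Rightarrow> bool" where
  "fls_small x \<longleftrightarrow> (\<forall>k\<le>0. x $$ k = 0)"

lemma fls_polypart_eq_0_iff: "fls_polypart x = 0 \<longleftrightarrow> fls_small x"
proof
  assume "fls_polypart x = 0"
  then have "x $$ (- int n) = 0" for n using coeff_fls_polypart[of x n] by simp
  then show "fls_small x" unfolding fls_small_def by (metis minus_minus nat_0_le neg_0_le_iff_le)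
next
  assume "fls_small x"
  then show "fls_polypart x = 0" by (intro poly_eqI) (simp add: coeff_fls_polypart fls_small_def)
qed

lemma fls_small_0: "fls_small 0"
  and fls_small_add: "fls_small x \<Longrightarrow> fls_small y \<Longrightarrow> fls_small (x + y)"
  and fls_small_diff: "fls_small x \<Longrightarrow> fls_small y \<Longrightarrow> fls_small (x - y)"
  unfolding fls_small_def by auto

lemma fls_small_iff_subdegree: "fls_small x \<longleftrightarrow> x = 0 \<or> fls_subdegree x \<ge> 1"
proof
  assume small: "fls_small x"
  show "x = 0 \<or> fls_subdegree x \<ge> 1"
  proof (cases "x = 0")
    case False
    then have "x $$ fls_subdegree x \<noteq> 0" by (rule nth_fls_subdegree_nonzero)
    then have "\<not> fls_subdegree x \<le> 0" using small unfolding fls_small_def by blast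
    then show ?thesis by simp
  qed simp
qed (auto simp: fls_small_def)

lemma fls_small_fractional_part: "fls_small (y - poly_fls (fls_polypart y))"
  by (simp add: fls_polypart_diff flip: fls_polypart_eq_0_iff)

lemma degree_fls_polypart_inverse:
  assumes "fls_small x" "x \<noteq> 0"
  shows "int (degree (fls_polypart (inverse x))) = fls_subdegree x"
  using degree_fls_polypart[of "inverse x"] assms by (simp add: fls_small_iff_subdegree)

lemma poly_fls_add_small:
  assumes "degree b \<ge> 1" "fls_small y"
  shows "poly_fls b + y \<noteq> 0" "fls_subdegree (poly_fls b + y) = - int (degree b)"
proof -
  have b: "b \<noteq> 0" using assms by auto
  have "fls_subdegree (poly_fls b + y) = fls_subdegree (poly_fls b)"
  proof (cases "y = 0")
    case False
    then show ?thesis using fls_subdegree_add_eq1[of "poly_fls b" y] assms(2) b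
      by (simp add: fls_subdegree_poly_fls fls_small_iff_subdegree)
  qed simp
  then show subdegree: "fls_subdegree (poly_fls b + y) = - int (degree b)"
    using b by (simp add: fls_subdegree_poly_fls)
  show "poly_fls b + y \<noteq> 0" using subdegree assms(1) by auto
qed

definition cf_next :: "'a::field fls \<Rightarrow> 'a fls option" where
  "cf_next r = (let s = r - poly_fls (fls_polypart r) in if s = 0 then None else Some (inverse s))"

lemma cf_rem_Suc: "cf_rem x (Suc n) = Option.bind (cf_rem x n) cf_next"
  by (cases "cf_rem x n") (simp_all add: cf_next_def)

lemma cf_rem_Suc_shift: "cf_rem x (Suc n) = Option.bind (cf_next x) (\<lambda>y. cf_rem y n)"
proof (induction n)
  case 0
  then show ?case by (cases "cf_next x") (auto simp: cf_rem_Suc cf_next_def Let_def)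
next
  case (Suc n)
  then show ?case by (cases "cf_next x") (simp_all add: cf_rem_Suc[of x "Suc n"] cf_rem_Suc[of _ n])
qed

lemma cfq_0: "cfq x 0 = Some (fls_polypart x)"
  unfolding cfq_def by simp

lemma cfq_Suc: "cfq x (Suc n) = Option.bind (cf_next x) (\<lambda>y. cfq y n)"
  unfolding cfq_def cf_rem_Suc_shift by (cases "cf_next x") simp_all

lemma cf_next_small: "fls_small x \<Longrightarrow> cf_next x = (if x = 0 then None else Some (inverse x))"
  unfolding cf_next_def by (simp flip: fls_polypart_eq_0_iff)

lemma cfq_Suc_fractional_part: "cfq (y - poly_fls (fls_polypart y)) (Suc n) = cfq y (Suc n)"
  unfolding cfq_Suc cf_next_def by (simp add: fls_polypart_diff Let_def)

definition cf_prefix :: "'a::field fls \<Rightarrow> 'a poly list \<Rightarrow> bool" where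
  "cf_prefix x bs \<longleftrightarrow> (\<forall>i<length bs. cfq x (Suc i) = Some (bs ! i))"

lemma cf_prefix_Nil [simp]: "cf_prefix x []"
  unfolding cf_prefix_def by simp

lemma cf_prefix_Cons:
  assumes "fls_small x"
  shows "cf_prefix x (b # bs) \<longleftrightarrow>
    x \<noteq> 0 \<and> fls_polypart (inverse x) = b \<and> cf_prefix (inverse x - poly_fls b) bs"
proof (cases "x = 0")
  case True
  then have "cfq x (Suc 0) = None" using assms by (simp add: cfq_Suc cf_next_small)
  then show ?thesis using True unfolding cf_prefix_def by force
next
  case False
  then have shift: "cfq x (Suc i) = cfq (inverse x) i" for i
    using assms by (simp add: cfq_Suc cf_next_small)
  have "cf_prefix x (b # bs) \<longleftrightarrow>
      cfq x (Suc 0) = Some b \<and> (\<forall>i<length bs. cfq x (Suc (Suc i)) = Some (bs ! i))"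
    unfolding cf_prefix_def by (auto simp: less_Suc_eq_0_disj)
  also have "\<dots> \<longleftrightarrow> fls_polypart (inverse x) = b \<and> cf_prefix (inverse x - poly_fls b) bs"
    unfolding cf_prefix_def using cfq_Suc_fractional_part[of "inverse x"]
    by (auto simp: shift cfq_0)
  finally show ?thesis using False by simp
qed

lemma cf_prefix_prefix: "cf_prefix x ys \<Longrightarrow> prefix xs ys \<Longrightarrow> cf_prefix x xs"
  unfolding cf_prefix_def prefix_def by (auto simp: nth_append)

lemma cf_prefix_snoc: "cf_prefix x (bs @ [b]) \<longleftrightarrow> cf_prefix x bs \<and> cfq x (Suc (length bs)) = Some b"
  unfolding cf_prefix_def by (auto simp: nth_append less_Suc_eq)

lemma cf_prefix_cfq: "cf_prefix x bs \<Longrightarrow> 1 \<le> i \<Longrightarrow> i \<le> length bs \<Longrightarrow> cfq x i = Some (bs ! (i - 1))"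
  unfolding cf_prefix_def by (cases i) auto

lemma cf_prefix_degree: "fls_small x \<Longrightarrow> cf_prefix x bs \<Longrightarrow> \<forall>b\<in>set bs. degree b \<ge> 1"
proof (induction bs arbitrary: x)
  case (Cons b bs)
  then have x: "x \<noteq> 0" "fls_polypart (inverse x) = b" "cf_prefix (inverse x - poly_fls b) bs"
    using cf_prefix_Cons by blast+
  have "degree b \<ge> 1"
    using degree_fls_polypart_inverse[OF Cons(2) x(1)] x(1,2) Cons(2)
    by (simp add: fls_small_iff_subdegree)
  then show ?case using Cons.IH x(3) fls_small_fractional_part[of "inverse x"] x(2) by simp
qed simp

definition deg_sum :: "'a::zero poly list \<Rightarrow> nat" where
  "deg_sum bs = sum_list (map degree bs)"

lemma deg_sum_simps [simp]:
  "deg_sum [] = 0" "deg_sum (b # bs) = degree b + deg_sum bs"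
  "deg_sum (bs @ cs) = deg_sum bs + deg_sum cs"
  unfolding deg_sum_def by simp_all

lemma deg_sum_ge_length: "\<forall>b\<in>set bs. degree b \<ge> 1 \<Longrightarrow> deg_sum bs \<ge> length bs"
  by (induction bs) auto

lemma fls_small_cfv: "\<forall>b\<in>set bs. degree b \<ge> 1 \<Longrightarrow> fls_small (cfv bs)"
  by (induction bs) (auto simp: fls_small_0 fls_small_iff_subdegree poly_fls_add_small)

lemma fls_subdegree_cfv_Cons:
  assumes "\<forall>c\<in>set (b # bs). degree c \<ge> 1"
  shows "cfv (b # bs) \<noteq> 0" "fls_subdegree (cfv (b # bs)) = int (degree b)"
  using poly_fls_add_small[of b "cfv bs"] assms fls_small_cfv[of bs] by simp_all

lemma fls_small_minus_cfv: "fls_small a \<Longrightarrow> \<forall>b\<in>set bs. degree b \<ge> 1 \<Longrightarrow> fls_small (a - cfv bs)"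
  using fls_small_cfv fls_small_diff by blast

definition fls_agree :: "int \<Rightarrow> 'a::zero fls \<Rightarrow> 'a fls \<Rightarrow> bool" where
  "fls_agree m x y \<longleftrightarrow> (\<forall>k\<le>m. x $$ k = y $$ k)"

lemma fls_agree_iff_subdegree:
  fixes x y :: "'a::group_add fls"
  shows "fls_agree m x y \<longleftrightarrow> x = y \<or> fls_subdegree (x - y) > m"
proof
  assume agree: "fls_agree m x y"
  show "x = y \<or> fls_subdegree (x - y) > m"
  proof (cases "x = y")
    case False
    then have "(x - y) $$ fls_subdegree (x - y) \<noteq> 0" by (intro nth_fls_subdegree_nonzero) simp
    then have "\<not> fls_subdegree (x - y) \<le> m" using agree unfolding fls_agree_def by auto
    then show ?thesis by simp
  qed simp
next
  assume "x = y \<or> fls_subdegree (x - y) > m"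
  then have "(x - y) $$ k = 0" if "k \<le> m" for k
    using that fls_eq0_below_subdegree[of k "x - y"] by (cases "x = y") auto
  then show "fls_agree m x y" unfolding fls_agree_def by simp
qed

lemma fls_agree_refl: "fls_agree m x x"
  and fls_agree_trans: "fls_agree m x y \<Longrightarrow> fls_agree m y z \<Longrightarrow> fls_agree m x z"
  and fls_agree_add: "fls_agree m x y \<Longrightarrow> fls_agree m u v \<Longrightarrow> fls_agree m (x + u) (y + v)"
  and fls_agree_mono: "fls_agree m x y \<Longrightarrow> m' \<le> m \<Longrightarrow> fls_agree m' x y"
  unfolding fls_agree_def by auto

lemma fls_agree_diff_swap:
  fixes a u v :: "'a::ab_group_add fls"
  shows "fls_agree m (a - u) v \<longleftrightarrow> fls_agree m (a - v) u"
  unfolding fls_agree_def by (auto simp: algebra_simps)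

lemma fls_small_if_agree: "fls_agree 0 x y \<Longrightarrow> fls_small y \<Longrightarrow> fls_small x"
  unfolding fls_agree_def fls_small_def by simp

lemma fls_agree_subdegree:
  assumes "fls_agree m x y" "y \<noteq> 0" "fls_subdegree y \<le> m"
  shows "x \<noteq> 0" "fls_subdegree x = fls_subdegree y"
proof -
  have "x $$ fls_subdegree y \<noteq> 0"
    using assms nth_fls_subdegree_nonzero[of y] unfolding fls_agree_def by simp
  moreover have "x $$ k = 0" if "k < fls_subdegree y" for k
    using assms that unfolding fls_agree_def by simp
  ultimately show "x \<noteq> 0" "fls_subdegree x = fls_subdegree y"
    by (auto intro: fls_subdegree_eqI)
qed

lemma cfv_Cons_eq_iff: "x = cfv (b # bs) \<longleftrightarrow> inverse x - poly_fls b = cfv bs"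
  by (metis cfv.simps(2) inverse_inverse_eq diff_eq_eq add.commute)

text \<open>The error of \<open>[0; b, bs]\<close> as an approximation of \<open>x\<close> is governed by the error of
  \<open>[0; bs]\<close> as an approximation of the next complete quotient \<open>1/x - b\<close>, with the degree
  shifted by \<open>2 deg b\<close>.\<close>

lemma cfv_Cons_error:
  assumes degs: "\<forall>c\<in>set (b # bs). degree c \<ge> 1"
    and x: "x \<noteq> 0" "fls_subdegree x = int (degree b)" and ne: "inverse x - poly_fls b \<noteq> cfv bs"
  shows "fls_subdegree (x - cfv (b # bs)) =
    fls_subdegree (inverse x - poly_fls b - cfv bs) + 2 * int (degree b)"
proof -
  have B: "poly_fls b + cfv bs \<noteq> 0"
    using poly_fls_add_small[of b "cfv bs"] degs fls_small_cfv[of bs] by simp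
  have y: "cfv (b # bs) \<noteq> 0" "fls_subdegree (cfv (b # bs)) = int (degree b)"
    using fls_subdegree_cfv_Cons[OF degs] by simp_all
  have "x - inverse B = (B - inverse x) * x * inverse B" if "B \<noteq> 0" for B :: "'a fls"
    using that x by (simp add: field_simps)
  from this[OF B] have "x - cfv (b # bs) = (cfv bs - (inverse x - poly_fls b)) * x * cfv (b # bs)"
    by (simp add: algebra_simps)
  then show ?thesis using x y ne by (simp add: fls_subdegree_minus_sym[of "cfv bs"])
qed

lemma cfv_Cons_agree_iff:
  assumes "\<forall>c\<in>set (b # bs). degree c \<ge> 1" "x \<noteq> 0" "fls_subdegree x = int (degree b)"
  shows "fls_agree (m + 2 * int (degree b)) x (cfv (b # bs)) \<longleftrightarrow>
    fls_agree m (inverse x - poly_fls b) (cfv bs)"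
  using cfv_Cons_error[OF assms] cfv_Cons_eq_iff[of x b bs] by (auto simp: fls_agree_iff_subdegree)

lemma cf_prefix_snoc_error:
  "fls_small x \<Longrightarrow> cf_prefix x (bs @ [b]) \<Longrightarrow>
     x \<noteq> cfv bs \<and> fls_subdegree (x - cfv bs) = 2 * int (deg_sum bs) + int (degree b)"
proof (induction bs arbitrary: x)
  case Nil
  then have "x \<noteq> 0" "fls_polypart (inverse x) = b" using cf_prefix_Cons by auto
  then show ?case using degree_fls_polypart_inverse[OF Nil(1)] by auto
next
  case (Cons b' bs)
  then have x: "x \<noteq> 0" "fls_polypart (inverse x) = b'"
    "cf_prefix (inverse x - poly_fls b') (bs @ [b])"
    using cf_prefix_Cons[of x b' "bs @ [b]"] by auto
  have "fls_small (inverse x - poly_fls b')"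
    using fls_small_fractional_part[of "inverse x"] x(2) by simp
  with Cons.IH x(3) have IH: "inverse x - poly_fls b' \<noteq> cfv bs"
    "fls_subdegree (inverse x - poly_fls b' - cfv bs) = 2 * int (deg_sum bs) + int (degree b)"
    by auto
  have degs: "\<forall>c\<in>set (b' # bs). degree c \<ge> 1"
    using cf_prefix_degree[OF Cons.prems] by simp
  have "fls_subdegree x = int (degree b')"
    using degree_fls_polypart_inverse[OF Cons(2) x(1)] x(2) by simp
  then show ?case using cfv_Cons_error[OF degs x(1)] cfv_Cons_eq_iff[of x b' bs] IH by simp
qed

lemma cf_prefix_if_agree:
  "\<forall>c\<in>set bs. degree c \<ge> 1 \<Longrightarrow> fls_small x \<Longrightarrow>
     fls_agree (2 * int (deg_sum bs)) x (cfv bs) \<Longrightarrow> cf_prefix x bs"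
proof (induction bs arbitrary: x)
  case (Cons b bs)
  have degs: "\<forall>c\<in>set (b # bs). degree c \<ge> 1" using Cons(2) .
  have y: "cfv (b # bs) \<noteq> 0" "fls_subdegree (cfv (b # bs)) = int (degree b)"
    using fls_subdegree_cfv_Cons[OF degs] by simp_all
  have x: "x \<noteq> 0" "fls_subdegree x = int (degree b)"
    using fls_agree_subdegree[OF Cons(4) y(1)] y(2) by simp_all
  define x' where "x' = inverse x - poly_fls b"
  have agree: "fls_agree (2 * int (deg_sum bs)) x' (cfv bs)"
    using Cons(4) cfv_Cons_agree_iff[OF degs x, of "2 * int (deg_sum bs)"]
    by (simp add: x'_def algebra_simps)
  have "fls_small x'"
    using fls_small_if_agree[OF fls_agree_mono[OF agree]] fls_small_cfv[of bs] degs by simp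
  then have "fls_polypart (inverse x) = b"
    by (simp add: x'_def fls_polypart_diff flip: fls_polypart_eq_0_iff)
  moreover have "cf_prefix x' bs" using Cons.IH degs \<open>fls_small x'\<close> agree by simp
  ultimately show ?case using cf_prefix_Cons[OF Cons(3)] x by (simp add: x'_def)
qed simp

lemma cf_prefix_extend:
  "fls_small x \<Longrightarrow> cf_prefix x bs \<Longrightarrow> x \<noteq> cfv bs \<Longrightarrow> \<exists>b. cf_prefix x (bs @ [b])"
proof (induction bs arbitrary: x)
  case Nil
  then show ?case using cf_prefix_Cons[OF Nil(1), of "fls_polypart (inverse x)" "[]"] by auto
next
  case (Cons b' bs)
  then have x: "x \<noteq> 0" "fls_polypart (inverse x) = b'"
    "cf_prefix (inverse x - poly_fls b') bs"
    using cf_prefix_Cons by blast+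
  have "fls_small (inverse x - poly_fls b')"
    using fls_small_fractional_part[of "inverse x"] x(2) by simp
  moreover have "inverse x - poly_fls b' \<noteq> cfv bs"
    using Cons(4) cfv_Cons_eq_iff[of x b' bs] by simp
  ultimately obtain b where "cf_prefix (inverse x - poly_fls b') (bs @ [b])"
    using Cons.IH x(3) by blast
  then show ?case using cf_prefix_Cons[OF Cons(2)] x by auto
qed

lemma cf_prefix_agree:
  assumes "fls_small x" "cf_prefix x bs"
  shows "fls_agree (2 * int (deg_sum bs)) x (cfv bs)"
proof (cases "x = cfv bs")
  case False
  then obtain b where b: "cf_prefix x (bs @ [b])" using cf_prefix_extend assms by blast
  have "degree b \<ge> 1" using cf_prefix_degree[OF assms(1) b] by simp
  then show ?thesis using cf_prefix_snoc_error[OF assms(1) b] by (simp add: fls_agree_iff_subdegree)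
qed (simp add: fls_agree_refl)

lemma cf_prefix_cfv: "\<forall>c\<in>set bs. degree c \<ge> 1 \<Longrightarrow> cf_prefix (cfv bs) bs"
  by (simp add: cf_prefix_if_agree fls_small_cfv fls_agree_refl)

lemma cfv_eq_poly_fraction:
  "\<forall>c\<in>set bs. degree c \<ge> 1 \<Longrightarrow>
     \<exists>P Q. Q \<noteq> 0 \<and> degree Q = deg_sum bs \<and> degree P \<le> degree Q \<and> cfv bs * poly_fls Q = poly_fls P"
proof (induction bs)
  case Nil
  show ?case by (rule exI[of _ 0], rule exI[of _ 1]) simp
next
  case (Cons b bs)
  then obtain P Q where PQ: "Q \<noteq> 0" "degree Q = deg_sum bs" "degree P \<le> degree Q"
    "cfv bs * poly_fls Q = poly_fls P"
    by auto
  have b: "degree b \<ge> 1" using Cons by simp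
  have "degree (b * Q) = degree b + degree Q" using PQ b by (intro degree_mult_eq) auto
  then have deg: "degree (b * Q + P) = degree b + degree Q"
    using degree_add_eq_left[of P "b * Q"] PQ b by simp
  then have "b * Q + P \<noteq> 0" using b by auto
  moreover have "poly_fls b + cfv bs = poly_fls (b * Q + P) / poly_fls Q"
    using PQ by (simp add: poly_fls_add poly_fls_mult field_simps)
  ultimately have "cfv (b # bs) * poly_fls (b * Q + P) = poly_fls Q"
    using PQ by simp
  then show ?case using deg PQ \<open>b * Q + P \<noteq> 0\<close> by (intro exI[of _ Q] exI[of _ "b * Q + P"]) auto
qed

lemma is_ratfun_cfv: "\<forall>c\<in>set bs. degree c \<ge> 1 \<Longrightarrow> is_ratfun (cfv bs)"
proof -
  assume "\<forall>c\<in>set bs. degree c \<ge> 1"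
  then obtain P Q where "Q \<noteq> 0" "cfv bs * poly_fls Q = poly_fls P"
    using cfv_eq_poly_fraction by blast
  then show ?thesis unfolding is_ratfun_def by (intro exI[of _ P] exI[of _ Q]) (simp add: field_simps)
qed

lemma cf_prefix_snoc_degree_balance:
  assumes a: "fls_small a" and degs: "\<forall>x\<in>set bs. degree x \<ge> 1" "\<forall>x\<in>set cs. degree x \<ge> 1"
    and b: "cf_prefix (a - cfv cs) (bs @ [b])" and c: "cf_prefix (a - cfv bs) (cs @ [c])"
  shows "2 * deg_sum bs + degree b = 2 * deg_sum cs + degree c"
proof -
  have "fls_subdegree (a - cfv cs - cfv bs) = 2 * int (deg_sum bs) + int (degree b)"
    using cf_prefix_snoc_error[OF fls_small_minus_cfv[OF a degs(2)] b] by simp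
  moreover have "fls_subdegree (a - cfv bs - cfv cs) = 2 * int (deg_sum cs) + int (degree c)"
    using cf_prefix_snoc_error[OF fls_small_minus_cfv[OF a degs(1)] c] by simp
  moreover have "a - cfv cs - cfv bs = a - cfv bs - cfv cs" by (simp add: algebra_simps)
  ultimately have "2 * int (deg_sum bs) + int (degree b) = 2 * int (deg_sum cs) + int (degree c)"
    by simp
  then show ?thesis by linarith
qed

lemma cf_prefix_swap:
  assumes a: "fls_small a" and degs: "\<forall>x\<in>set bs. degree x \<ge> 1" "\<forall>x\<in>set cs. degree x \<ge> 1"
    and bs: "cf_prefix (a - cfv cs) bs" and le: "deg_sum cs \<le> deg_sum bs"
  shows "cf_prefix (a - cfv bs) cs"
proof (rule cf_prefix_if_agree[OF degs(2) fls_small_minus_cfv[OF a degs(1)]])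
  have "fls_agree (2 * int (deg_sum bs)) (a - cfv cs) (cfv bs)"
    using cf_prefix_agree[OF fls_small_minus_cfv[OF a degs(2)] bs] .
  then show "fls_agree (2 * int (deg_sum cs)) (a - cfv bs) (cfv cs)"
    using le by (auto simp: fls_agree_diff_swap elim: fls_agree_mono)
qed

definition sh_inv :: "'a::field fls \<Rightarrow> 'a poly list \<Rightarrow> 'a poly list \<Rightarrow> bool" where
  "sh_inv a bs cs \<longleftrightarrow> length bs = length cs
     \<and> (\<forall>x\<in>set bs. degree x \<ge> 1) \<and> (\<forall>x\<in>set cs. degree x \<ge> 1)
     \<and> cf_prefix (a - cfv cs) bs \<and> cf_prefix (a - cfv bs) cs
     \<and> 2 * int (deg_sum cs) - 2 * int (deg_sum bs) \<ge> 4 * int (length cs)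
     \<and> (cs \<noteq> [] \<longrightarrow> 2 * int (deg_sum cs) - 2 * int (deg_sum bs) \<ge> int (degree (last cs)) + 1)"

lemma sh_inv_Nil: "sh_inv a [] []"
  unfolding sh_inv_def by simp

definition sh_next_b :: "'a::field fls \<Rightarrow> 'a poly list \<Rightarrow> 'a poly list \<Rightarrow> 'a poly \<Rightarrow> bool" where
  "sh_next_b a bs cs b \<longleftrightarrow> cf_prefix (a - cfv cs) (bs @ [b]) \<and> cf_prefix (a - cfv (bs @ [b])) cs
     \<and> degree b \<ge> 1 \<and> int (degree b) \<ge> 2 * int (deg_sum cs) - 2 * int (deg_sum bs) + 1
     \<and> (cs \<noteq> [] \<longrightarrow> degree b \<ge> degree (last cs) + 2)"

definition sh_next_c :: "'a::field fls \<Rightarrow> 'a poly list \<Rightarrow> 'a poly list \<Rightarrow> 'a poly \<Rightarrow> 'a poly \<Rightarrow> bool" where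
  "sh_next_c a bs cs b c \<longleftrightarrow> sh_inv a (bs @ [b]) (cs @ [c])
     \<and> degree c \<ge> degree b + 2 \<and> (cs = [] \<longrightarrow> degree c \<ge> 2 * degree b + 1)"

lemma sh_next_b_exists:
  assumes a: "fls_small a" and inv: "sh_inv a bs cs" and ne: "a \<noteq> cfv bs + cfv cs"
  shows "\<exists>b. sh_next_b a bs cs b"
proof -
  have degs: "\<forall>x\<in>set bs. degree x \<ge> 1" "\<forall>x\<in>set cs. degree x \<ge> 1"
    and pre: "cf_prefix (a - cfv cs) bs" "cf_prefix (a - cfv bs) cs"
    and gap: "2 * int (deg_sum cs) - 2 * int (deg_sum bs) \<ge> 0"
    and gap_last: "cs \<noteq> [] \<longrightarrow> 2 * int (deg_sum cs) - 2 * int (deg_sum bs) \<ge> int (degree (last cs)) + 1"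
    using inv unfolding sh_inv_def by auto
  have ne': "a - cfv cs \<noteq> cfv bs" "a - cfv bs \<noteq> cfv cs" using ne by (auto simp: algebra_simps)
  obtain b where b: "cf_prefix (a - cfv cs) (bs @ [b])"
    using cf_prefix_extend[OF fls_small_minus_cfv[OF a degs(2)] pre(1) ne'(1)] by blast
  txt \<open>\<open>c\<close> is auxiliary: it only serves to determine \<open>deg b\<close>.\<close>
  obtain c where c: "cf_prefix (a - cfv bs) (cs @ [c])"
    using cf_prefix_extend[OF fls_small_minus_cfv[OF a degs(1)] pre(2) ne'(2)] by blast
  have "degree c \<ge> 1" using cf_prefix_degree[OF fls_small_minus_cfv[OF a degs(1)] c] by simp
  moreover have "2 * deg_sum bs + degree b = 2 * deg_sum cs + degree c"
    using cf_prefix_snoc_degree_balance[OF a degs b c] .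
  ultimately have deg_b: "int (degree b) \<ge> 2 * int (deg_sum cs) - 2 * int (deg_sum bs) + 1"
    by linarith
  have "degree b \<ge> 1" using deg_b gap by linarith
  then have "cf_prefix (a - cfv (bs @ [b])) cs"
    using cf_prefix_swap[OF a _ degs(2) b] degs(1) deg_b by simp
  moreover have "cs \<noteq> [] \<longrightarrow> degree b \<ge> degree (last cs) + 2" using gap_last deg_b by linarith
  ultimately show ?thesis unfolding sh_next_b_def using b deg_b \<open>degree b \<ge> 1\<close> by blast
qed

lemma sh_next_c_exists:
  assumes a: "fls_small a" and inv: "sh_inv a bs cs" and b: "sh_next_b a bs cs b"
    and ne: "a \<noteq> cfv (bs @ [b]) + cfv cs"
  shows "\<exists>c. sh_next_c a bs cs b c"
proof -
  have degs: "\<forall>x\<in>set (bs @ [b]). degree x \<ge> 1" "\<forall>x\<in>set cs. degree x \<ge> 1"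
    and len: "length bs = length cs"
    and gap: "2 * int (deg_sum cs) - 2 * int (deg_sum bs) \<ge> 4 * int (length cs)"
    using inv b unfolding sh_inv_def sh_next_b_def by auto
  have pre: "cf_prefix (a - cfv cs) (bs @ [b])" "cf_prefix (a - cfv (bs @ [b])) cs"
    and deg_b: "int (degree b) \<ge> 2 * int (deg_sum cs) - 2 * int (deg_sum bs) + 1"
    using b unfolding sh_next_b_def by auto
  have ne': "a - cfv cs \<noteq> cfv (bs @ [b])" "a - cfv (bs @ [b]) \<noteq> cfv cs"
    using ne by (auto simp: algebra_simps)
  txt \<open>\<open>b'\<close> is auxiliary: it only serves to determine \<open>deg c\<close>.\<close>
  obtain b' where b': "cf_prefix (a - cfv cs) ((bs @ [b]) @ [b'])"
    using cf_prefix_extend[OF fls_small_minus_cfv[OF a degs(2)] pre(1) ne'(1)] by blast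
  obtain c where c: "cf_prefix (a - cfv (bs @ [b])) (cs @ [c])"
    using cf_prefix_extend[OF fls_small_minus_cfv[OF a degs(1)] pre(2) ne'(2)] by blast
  have "degree b' \<ge> 1" using cf_prefix_degree[OF fls_small_minus_cfv[OF a degs(2)] b'] by simp
  moreover have "degree c \<ge> 1" using cf_prefix_degree[OF fls_small_minus_cfv[OF a degs(1)] c] by simp
  moreover have "2 * deg_sum (bs @ [b]) + degree b' = 2 * deg_sum cs + degree c"
    using cf_prefix_snoc_degree_balance[OF a degs b' c] .
  ultimately have deg_c: "int (degree c) = 2 * int (degree b) + int (degree b')
      - (2 * int (deg_sum cs) - 2 * int (deg_sum bs))" and "degree c \<ge> 1"
    by simp_all
  have degs': "\<forall>x\<in>set (cs @ [c]). degree x \<ge> 1" using degs(2) \<open>degree c \<ge> 1\<close> by simp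
  have "cf_prefix (a - cfv (cs @ [c])) (bs @ [b])"
    using cf_prefix_swap[OF a degs' degs(1) c] deg_c deg_b \<open>degree b' \<ge> 1\<close> by simp
  then have "sh_inv a (bs @ [b]) (cs @ [c])"
    unfolding sh_inv_def using len degs degs' c gap deg_c deg_b \<open>degree b' \<ge> 1\<close> by simp
  moreover have "degree c \<ge> degree b + 2" using deg_c deg_b \<open>degree b' \<ge> 1\<close> by linarith
  moreover have "cs = [] \<longrightarrow> degree c \<ge> 2 * degree b + 1"
    using deg_c \<open>degree b' \<ge> 1\<close> len by auto
  ultimately show ?thesis unfolding sh_next_c_def by blast
qed

lemma sstep_Run_cases [consumes 2, case_names stop stop_b run]:
  assumes a: "fls_small a" and inv: "sh_inv a bs cs"
  obtains (stop) "a = cfv bs + cfv cs" "sstep a (Run bs cs) = Stop bs cs"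
  | (stop_b) b where "sh_next_b a bs cs b" "a = cfv (bs @ [b]) + cfv cs"
      "sstep a (Run bs cs) = Stop (bs @ [b]) cs"
  | (run) b c where "sh_next_b a bs cs b" "sh_next_c a bs cs b c"
      "sstep a (Run bs cs) = Run (bs @ [b]) (cs @ [c])"
proof (cases "a = cfv bs + cfv cs")
  case True
  then show ?thesis using stop by simp
next
  case ne: False
  obtain b where b: "sh_next_b a bs cs b" using sh_next_b_exists[OF a inv ne] by blast
  then have qb: "cfq (a - cfv cs) (Suc (length bs)) = Some b"
    unfolding sh_next_b_def cf_prefix_snoc by simp
  show ?thesis
  proof (cases "a = cfv (bs @ [b]) + cfv cs")
    case True
    then show ?thesis using stop_b[OF b] ne qb by simp
  next
    case ne': False
    obtain c where c: "sh_next_c a bs cs b c" using sh_next_c_exists[OF a inv b ne'] by blast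
    have "length cs = length bs" using inv unfolding sh_inv_def by simp
    then have "cfq (a - cfv (bs @ [b])) (Suc (length bs)) = Some c"
      using c unfolding sh_next_c_def sh_inv_def cf_prefix_snoc by simp
    then show ?thesis using run[OF b c] ne ne' qb by simp
  qed
qed

lemma sh_state_0: "sh_state a 0 = Run [] []"
  unfolding sh_state_def by simp

lemma sh_state_Suc: "sh_state a (Suc k) = sstep a (sh_state a k)"
  unfolding sh_state_def by simp

text \<open>A stopped run keeps the invariant for its \<open>c\<close>-list (with the \<open>b\<close>-list of the preceding
  state); the degree bound for rational \<open>\<alpha>\<close> is read off from it.\<close>

definition sh_state_inv :: "'a::field fls \<Rightarrow> nat \<Rightarrow> 'a poly sstate \<Rightarrow> bool" where
  "sh_state_inv a k st \<longleftrightarrow>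
     (\<exists>bs cs. st = Run bs cs \<and> length bs = k \<and> sh_inv a bs cs) \<or>
     (\<exists>bs cs. st = Stop bs cs \<and> a = cfv bs + cfv cs \<and> length bs \<le> k \<and> length cs < k
        \<and> (\<forall>x\<in>set bs. degree x \<ge> 1) \<and> (\<exists>bs'. sh_inv a bs' cs))"

lemma sh_state_inv_step:
  assumes a: "fls_small a" and st: "sh_state_inv a k st"
  shows "sh_state_inv a (Suc k) (sstep a st)"
  using st[unfolded sh_state_inv_def]
proof (elim disjE exE conjE)
  fix bs cs assume st: "st = Run bs cs" and len: "length bs = k" and inv: "sh_inv a bs cs"
  then have facts: "length cs = length bs" "\<forall>x\<in>set bs. degree x \<ge> 1"
    unfolding sh_inv_def by auto
  from a inv show ?thesis
  proof (cases rule: sstep_Run_cases)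
    case stop
    then show ?thesis using st len facts inv by (auto simp: sh_state_inv_def)
  next
    case (stop_b b)
    then show ?thesis using st len facts inv by (auto simp: sh_state_inv_def sh_next_b_def)
  next
    case (run b c)
    then show ?thesis using st len by (simp add: sh_state_inv_def sh_next_c_def)
  qed
qed (auto simp: sh_state_inv_def)

lemma sh_state_inv: "fls_small a \<Longrightarrow> sh_state_inv a k (sh_state a k)"
proof (induction k)
  case 0
  show ?case by (simp add: sh_state_0 sh_state_inv_def sh_inv_Nil)
next
  case (Suc k)
  then show ?case by (simp add: sh_state_Suc sh_state_inv_step)
qed

lemma sh_state_cases [consumes 1, case_names run stop]:
  assumes "fls_small a"
  obtains (run) bs cs where "sh_state a k = Run bs cs" "length bs = k" "sh_inv a bs cs"
  | (stop) bs cs bs' where "sh_state a k = Stop bs cs" "a = cfv bs + cfv cs" "length bs \<le> k"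
      "length cs < k" "\<forall>x\<in>set bs. degree x \<ge> 1" "sh_inv a bs' cs"
  using sh_state_inv[OF assms, of k] unfolding sh_state_inv_def by blast

lemma sh_state_not_Fail:
  assumes "fls_small a"
  shows "sh_state a k \<noteq> Fail"
  using assms by (cases rule: sh_state_cases[where k = k]) simp_all

lemma sh_state_Stop_mono:
  assumes "sh_state a j = Stop bs cs" "j \<le> k"
  shows "sh_state a k = Stop bs cs"
  using assms(2) by (induction k rule: dec_induct) (simp_all add: assms(1) sh_state_Suc)

lemma length_st_bs_sh_state:
  assumes "fls_small a"
  shows "length (st_bs (sh_state a k)) \<le> k"
  using assms by (cases rule: sh_state_cases[where k = k]) auto

lemma prefix_sh_state_Suc:
  assumes a: "fls_small a"
  shows "prefix (st_bs (sh_state a k)) (st_bs (sh_state a (Suc k)))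
    \<and> prefix (st_cs (sh_state a k)) (st_cs (sh_state a (Suc k)))"
  using a
proof (cases rule: sh_state_cases[where k = k])
  case (run bs cs)
  have "sh_state a (Suc k) = sstep a (Run bs cs)" by (simp add: sh_state_Suc run(1))
  with a run(3) run(1) show ?thesis by (cases rule: sstep_Run_cases) auto
qed (simp add: sh_state_Suc)

lemma prefix_sh_state:
  assumes "fls_small a" "j \<le> k"
  shows "prefix (st_bs (sh_state a j)) (st_bs (sh_state a k))"
    and "prefix (st_cs (sh_state a j)) (st_cs (sh_state a k))"
  using assms(2) prefix_sh_state_Suc[OF assms(1)]
  by (induction k rule: dec_induct) (auto intro: prefix_order.trans)

lemma nth_LEAST_prefix_chain:
  fixes L :: "nat \<Rightarrow> 'b list"
  assumes chain: "\<And>j k. j \<le> k \<Longrightarrow> prefix (L j) (L k)" and n: "1 \<le> n" "n \<le> length (L k)"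
  shows "L (LEAST j. n \<le> length (L j)) ! (n - 1) = L k ! (n - 1)"
proof -
  let ?j = "LEAST j. n \<le> length (L j)"
  have "n \<le> length (L ?j)" "?j \<le> k" using n(2) by (auto intro: LeastI Least_le)
  then have "n - 1 < length (L ?j)" using n(1) by linarith
  moreover obtain zs where "L k = L ?j @ zs" using chain[OF \<open>?j \<le> k\<close>] prefixE by metis
  ultimately show ?thesis by (simp add: nth_append)
qed

lemma map_LEAST_prefix_chain:
  fixes L :: "nat \<Rightarrow> 'b list"
  assumes chain: "\<And>j k. j \<le> k \<Longrightarrow> prefix (L j) (L k)" and len: "length (L k) = N"
  shows "map (\<lambda>n. L (LEAST j. n \<le> length (L j)) ! (n - 1)) [1..<Suc N] = L k"
proof (rule nth_equalityI)
  fix i assume "i < length (map (\<lambda>n. L (LEAST j. n \<le> length (L j)) ! (n - 1)) [1..<Suc N])"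
  then show "map (\<lambda>n. L (LEAST j. n \<le> length (L j)) ! (n - 1)) [1..<Suc N] ! i = L k ! i"
    using nth_LEAST_prefix_chain[of L "Suc i" k] chain len by (simp del: upt_Suc)
qed (simp add: len)

lemma sh_b_eq:
  "fls_small a \<Longrightarrow> 1 \<le> n \<Longrightarrow> n \<le> length (st_bs (sh_state a k)) \<Longrightarrow>
    sh_b a n = st_bs (sh_state a k) ! (n - 1)"
  unfolding sh_b_def by (rule nth_LEAST_prefix_chain) (simp_all add: prefix_sh_state)

lemma sh_c_eq:
  "fls_small a \<Longrightarrow> 1 \<le> n \<Longrightarrow> n \<le> length (st_cs (sh_state a k)) \<Longrightarrow>
    sh_c a n = st_cs (sh_state a k) ! (n - 1)"
  unfolding sh_c_def by (rule nth_LEAST_prefix_chain) (simp_all add: prefix_sh_state)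

lemma sh_bcf_eq:
  "fls_small a \<Longrightarrow> length (st_bs (sh_state a k)) = n \<Longrightarrow> sh_bcf a n = cfv (st_bs (sh_state a k))"
  unfolding sh_bcf_def sh_b_def by (subst map_LEAST_prefix_chain) (simp_all add: prefix_sh_state)

lemma sh_ccf_eq:
  "fls_small a \<Longrightarrow> length (st_cs (sh_state a k)) = n \<Longrightarrow> sh_ccf a n = cfv (st_cs (sh_state a k))"
  unfolding sh_ccf_def sh_c_def by (subst map_LEAST_prefix_chain) (simp_all add: prefix_sh_state)

lemma length_sh_state_reached_by_step:
  assumes a: "fls_small a"
  shows "n \<le> length (st_bs (sh_state a k)) \<Longrightarrow> n \<le> length (st_bs (sh_state a n))"
    and "n \<le> length (st_cs (sh_state a k)) \<Longrightarrow> n \<le> length (st_cs (sh_state a n))"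
proof -
  have later: "sh_state a n = sh_state a k
      \<or> length (st_bs (sh_state a n)) = n \<and> length (st_cs (sh_state a n)) = n" if "n < k"
    using a
  proof (cases rule: sh_state_cases[where k = n])
    case (run bs cs)
    have "length cs = length bs" using run(3) unfolding sh_inv_def by simp
    then show ?thesis using run(1,2) by simp
  next
    case (stop bs cs)
    then show ?thesis using sh_state_Stop_mono[OF stop(1), of k] that by simp
  qed
  have earlier: "prefix (st_bs (sh_state a k)) (st_bs (sh_state a n))"
    "prefix (st_cs (sh_state a k)) (st_cs (sh_state a n))" if "k \<le> n"
    using prefix_sh_state[OF a that] by simp_all
  show "n \<le> length (st_bs (sh_state a k)) \<Longrightarrow> n \<le> length (st_bs (sh_state a n))"
    using later earlier(1)[THEN prefix_length_le] by (cases "n < k") auto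
  show "n \<le> length (st_cs (sh_state a k)) \<Longrightarrow> n \<le> length (st_cs (sh_state a n))"
    using later earlier(2)[THEN prefix_length_le] by (cases "n < k") auto
qed

lemma sh_state_step_producing_b [consumes 2, case_names stop run]:
  assumes a: "fls_small a" and len: "length (st_bs (sh_state a (Suc m))) = Suc m"
  obtains (stop) bs cs b where "sh_state a m = Run bs cs" "length bs = m" "sh_inv a bs cs"
      "sh_next_b a bs cs b" "sh_state a (Suc m) = Stop (bs @ [b]) cs"
  | (run) bs cs b c where "sh_state a m = Run bs cs" "length bs = m" "sh_inv a bs cs"
      "sh_next_b a bs cs b" "sh_next_c a bs cs b c" "sh_state a (Suc m) = Run (bs @ [b]) (cs @ [c])"
  using a
proof (cases rule: sh_state_cases[where k = m])
  case (run bs cs)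
  note state = run
  have step: "sh_state a (Suc m) = sstep a (Run bs cs)" by (simp add: sh_state_Suc state(1))
  from a state(3) show ?thesis
  proof (cases rule: sstep_Run_cases)
    case stop
    then show ?thesis using len step state(2) by simp
  next
    case (stop_b b)
    then show ?thesis using that(1)[OF state] step by simp
  next
    case (run b c)
    then show ?thesis using that(2)[OF state] step by simp
  qed
qed (use len in \<open>simp add: sh_state_Suc\<close>)

lemma b_defined_sh_state:
  assumes a: "fls_small a" and bd: "b_defined a (Suc m)"
  obtains bs cs b where "sh_state a m = Run bs cs" "length bs = m" "length cs = m"
    "sh_next_b a bs cs b" "st_bs (sh_state a (Suc m)) = bs @ [b]"
proof -
  obtain k where "Suc m \<le> length (st_bs (sh_state a k))" using bd unfolding b_defined_def by blast
  then have "length (st_bs (sh_state a (Suc m))) = Suc m"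
    using length_sh_state_reached_by_step(1)[OF a] length_st_bs_sh_state[OF a, of "Suc m"]
    by (simp add: le_antisym)
  with a have "\<exists>bs cs b. sh_state a m = Run bs cs \<and> length bs = m \<and> sh_inv a bs cs
      \<and> sh_next_b a bs cs b \<and> st_bs (sh_state a (Suc m)) = bs @ [b]"
    by (cases rule: sh_state_step_producing_b) auto
  then show ?thesis using that unfolding sh_inv_def by metis
qed

lemma c_defined_sh_state:
  assumes a: "fls_small a" and cd: "c_defined a (Suc m)"
  obtains bs cs b c where "length bs = m" "length cs = m" "sh_next_c a bs cs b c"
    "sh_state a (Suc m) = Run (bs @ [b]) (cs @ [c])"
proof -
  obtain k where "Suc m \<le> length (st_cs (sh_state a k))" using cd unfolding c_defined_def by blast
  then have cs_len: "Suc m \<le> length (st_cs (sh_state a (Suc m)))"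
    by (rule length_sh_state_reached_by_step(2)[OF a])
  from a have "length (st_bs (sh_state a (Suc m))) = Suc m"
  proof (cases rule: sh_state_cases[where k = "Suc m"])
    case (stop bs cs)
    then show ?thesis using stop(1,4) cs_len by simp
  qed simp
  with a have "\<exists>bs cs b c. length bs = m \<and> sh_inv a bs cs \<and> sh_next_c a bs cs b c
      \<and> sh_state a (Suc m) = Run (bs @ [b]) (cs @ [c])"
  proof (cases rule: sh_state_step_producing_b)
    case (stop bs cs b)
    have "length cs = length bs" using stop(3) unfolding sh_inv_def by simp
    then have "length (st_cs (sh_state a (Suc m))) = m" using stop(2,5) by simp
    with cs_len show ?thesis by linarith
  qed blast
  then show ?thesis using that unfolding sh_inv_def by metis
qed

lemma sh_b_properties:
  assumes a: "fls_small a" and n: "1 \<le> n" and bd: "b_defined a n"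
  shows "\<forall>i. 1 \<le> i \<and> i \<le> n - 1 \<longrightarrow> cfq (a - sh_bcf a n) i = Some (sh_c a i)"
    and "2 \<le> n \<Longrightarrow> degree (sh_b a n) \<ge> degree (sh_c a (n - 1)) + 2"
proof -
  obtain m where m: "n = Suc m" using n by (cases n) auto
  obtain bs cs b where state: "sh_state a m = Run bs cs" and len: "length bs = m" "length cs = m"
    and b: "sh_next_b a bs cs b" and bs': "st_bs (sh_state a n) = bs @ [b]"
    using b_defined_sh_state[OF a bd[unfolded m]] unfolding m .
  have c: "sh_c a i = cs ! (i - 1)" if "1 \<le> i" "i \<le> m" for i
    using sh_c_eq[OF a that(1), of m] state len that by simp
  have "cfq (a - sh_bcf a n) i = Some (sh_c a i)" if "1 \<le> i" "i \<le> n - 1" for i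
    using cf_prefix_cfq[of "a - cfv (bs @ [b])" cs i] b sh_bcf_eq[OF a, of n n] bs' len that c m
    by (simp add: sh_next_b_def)
  then show "\<forall>i. 1 \<le> i \<and> i \<le> n - 1 \<longrightarrow> cfq (a - sh_bcf a n) i = Some (sh_c a i)" by blast
  assume "2 \<le> n"
  then have "cs \<noteq> []" using len m by auto
  moreover have "sh_c a (n - 1) = last cs"
    using c[of m] len m \<open>cs \<noteq> []\<close> \<open>2 \<le> n\<close> by (simp add: last_conv_nth)
  moreover have "sh_b a n = b" using sh_b_eq[OF a n, of n] bs' len m by (simp add: nth_append)
  ultimately show "degree (sh_b a n) \<ge> degree (sh_c a (n - 1)) + 2"
    using b by (simp add: sh_next_b_def)
qed

lemma sh_c_properties:
  assumes a: "fls_small a" and n: "1 \<le> n" and cd: "c_defined a n"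
  shows "\<forall>i. 1 \<le> i \<and> i \<le> n \<longrightarrow> cfq (a - sh_ccf a n) i = Some (sh_b a i)
                              \<and> cfq (a - sh_bcf a n) i = Some (sh_c a i)"
    and "degree (sh_c a n) \<ge> degree (sh_b a n) + 2"
    and "n = 1 \<Longrightarrow> degree (sh_c a 1) \<ge> 2 * degree (sh_b a 1) + 1"
proof -
  obtain m where m: "n = Suc m" using n by (cases n) auto
  obtain bs cs b c where len: "length bs = m" "length cs = m" and c: "sh_next_c a bs cs b c"
    and state: "sh_state a n = Run (bs @ [b]) (cs @ [c])"
    using c_defined_sh_state[OF a cd[unfolded m]] unfolding m .
  have b_eq: "sh_b a i = (bs @ [b]) ! (i - 1)" and c_eq: "sh_c a i = (cs @ [c]) ! (i - 1)"
    if "1 \<le> i" "i \<le> n" for i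
    using sh_b_eq[OF a that(1), of n] sh_c_eq[OF a that(1), of n] state len m that by simp_all
  have bcf: "sh_bcf a n = cfv (bs @ [b])" and ccf: "sh_ccf a n = cfv (cs @ [c])"
    using sh_bcf_eq[OF a, of n n] sh_ccf_eq[OF a, of n n] state len m by simp_all
  have pre: "cf_prefix (a - cfv (cs @ [c])) (bs @ [b])" "cf_prefix (a - cfv (bs @ [b])) (cs @ [c])"
    using c unfolding sh_next_c_def sh_inv_def by auto
  show "\<forall>i. 1 \<le> i \<and> i \<le> n \<longrightarrow> cfq (a - sh_ccf a n) i = Some (sh_b a i)
                              \<and> cfq (a - sh_bcf a n) i = Some (sh_c a i)"
    using cf_prefix_cfq[OF pre(1)] cf_prefix_cfq[OF pre(2)] b_eq c_eq bcf ccf len m by simp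
  have "sh_b a n = b" "sh_c a n = c" using b_eq[of n] c_eq[of n] len m by (simp_all add: nth_append)
  then show "degree (sh_c a n) \<ge> degree (sh_b a n) + 2"
    and "n = 1 \<Longrightarrow> degree (sh_c a 1) \<ge> 2 * degree (sh_b a 1) + 1"
    using c len m by (auto simp: sh_next_c_def)
qed

lemma dist_le_if_fls_agree:
  fixes x y :: "'a::group_add fls"
  assumes "fls_agree (int n) x y"
  shows "dist x y \<le> (1/2) ^ n"
proof (cases "x = y")
  case False
  then have s: "fls_subdegree (x - y) > int n" using assms by (simp add: fls_agree_iff_subdegree)
  then have "dist x y = inverse (2 ^ nat (fls_subdegree (x - y)))"
    using False unfolding dist_fls_def by simp
  also have "\<dots> \<le> inverse (2 ^ n)"
    using s by (intro le_imp_inverse_le) (auto intro: power_increasing)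
  finally show ?thesis by (simp add: power_one_over inverse_eq_divide)
qed simp

lemma fls_eq_if_agree_all:
  fixes x y :: "'a::zero fls"
  assumes "\<And>n. fls_agree (int n) x y"
  shows "x = y"
proof (rule fls_eqI)
  fix k
  show "x $$ k = y $$ k" using assms[of "nat k"] unfolding fls_agree_def by simp
qed

lemma fls_agree_Cauchy_limit:
  fixes f :: "nat \<Rightarrow> 'a::ab_group_add fls"
  assumes cauchy: "\<And>n m. n \<le> m \<Longrightarrow> fls_agree (int n) (f m) (f n)"
  shows "\<exists>L. (\<forall>n. fls_agree (int n) (f n) L) \<and> f \<longlonglongrightarrow> L"
proof -
  txt \<open>The coefficient of index \<open>k \<ge> 0\<close> is taken from \<open>f k\<close>, the negative ones from \<open>f 0\<close>.\<close>
  define L where "L = f 0 + fps_to_fls (Abs_fps (\<lambda>i. (f i - f 0) $$ int i))"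
  have agree: "fls_agree (int n) (f n) L" for n
    unfolding fls_agree_def
  proof (intro allI impI)
    fix k assume k: "k \<le> int n"
    show "f n $$ k = L $$ k"
    proof (cases "k < 0")
      case True
      then show ?thesis using cauchy[of 0 n] unfolding fls_agree_def by (simp add: L_def)
    next
      case False
      then show ?thesis using cauchy[of "nat k" n] k unfolding fls_agree_def by (simp add: L_def)
    qed
  qed
  have "f \<longlonglongrightarrow> L"
  proof (rule metric_LIMSEQ_I)
    fix r :: real assume "0 < r"
    then obtain N where N: "(1/2) ^ N < r" using real_arch_pow_inv[of r "1/2"] by auto
    have "dist (f m) L < r" if "N \<le> m" for m
      using dist_le_if_fls_agree[OF fls_agree_trans[OF cauchy[OF that] agree]] N by linarith
    then show "\<exists>N. \<forall>m\<ge>N. dist (f m) L < r" by blast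
  qed
  with agree show ?thesis by blast
qed

lemma cfv_agree_prefix:
  assumes "\<forall>c\<in>set ys. degree c \<ge> 1" "prefix xs ys"
  shows "fls_agree (int (length xs)) (cfv ys) (cfv xs)"
proof -
  have "fls_agree (2 * int (deg_sum xs)) (cfv ys) (cfv xs)"
    using cf_prefix_agree[OF fls_small_cfv cf_prefix_prefix[OF cf_prefix_cfv]] assms by blast
  moreover have "length xs \<le> deg_sum xs"
    using deg_sum_ge_length assms set_mono_prefix by blast
  ultimately show ?thesis by (auto elim: fls_agree_mono)
qed

lemma cfv_prefix_chain_converges:
  fixes L :: "nat \<Rightarrow> 'a::field poly list"
  assumes chain: "\<And>j k. j \<le> k \<Longrightarrow> prefix (L j) (L k)"
    and len: "\<And>k. length (L k) = k" and degs: "\<And>k. \<forall>c\<in>set (L k). degree c \<ge> 1"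
  shows "\<exists>l. (\<forall>n. fls_agree (int n) (cfv (L n)) l) \<and> (\<lambda>k. cfv (L k)) \<longlonglongrightarrow> l"
  using cfv_agree_prefix[OF degs chain] len by (intro fls_agree_Cauchy_limit) metis

lemma sh_inv_if_not_stops:
  assumes a: "fls_small a" and ns: "\<not> sh_stops a"
  shows "length (st_bs (sh_state a k)) = k \<and> sh_inv a (st_bs (sh_state a k)) (st_cs (sh_state a k))"
  using a
proof (cases rule: sh_state_cases[where k = k])
  case (stop bs cs)
  then show ?thesis using ns unfolding sh_stops_def by blast
qed simp

lemma sh_nonstop:
  assumes a: "fls_small a" and ns: "\<not> sh_stops a"
  shows "(\<forall>n. b_defined a n \<and> c_defined a n) \<and> convergent (sh_bcf a) \<and> convergent (sh_ccf a)
    \<and> a = lim (sh_bcf a) + lim (sh_ccf a)"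
proof -
  define BS where "BS k = st_bs (sh_state a k)" for k
  define CS where "CS k = st_cs (sh_state a k)" for k
  have run: "length (BS k) = k \<and> sh_inv a (BS k) (CS k)" for k
    using sh_inv_if_not_stops[OF a ns] unfolding BS_def CS_def .
  then have len: "length (BS k) = k" "length (CS k) = k" for k
    using run[of k] unfolding sh_inv_def by simp_all
  have degs: "\<forall>c\<in>set (BS k). degree c \<ge> 1" "\<forall>c\<in>set (CS k). degree c \<ge> 1"
    and pre: "cf_prefix (a - cfv (CS k)) (BS k)" for k
    using run[of k] unfolding sh_inv_def by auto
  have bcf: "sh_bcf a = (\<lambda>k. cfv (BS k))" and ccf: "sh_ccf a = (\<lambda>k. cfv (CS k))"
    using sh_bcf_eq[OF a] sh_ccf_eq[OF a] len unfolding BS_def CS_def by auto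
  obtain LB where LB: "\<forall>n. fls_agree (int n) (cfv (BS n)) LB" "(\<lambda>k. cfv (BS k)) \<longlonglongrightarrow> LB"
    using cfv_prefix_chain_converges[of BS] prefix_sh_state(1)[OF a] len degs
    unfolding BS_def by blast
  obtain LC where LC: "\<forall>n. fls_agree (int n) (cfv (CS n)) LC" "(\<lambda>k. cfv (CS k)) \<longlonglongrightarrow> LC"
    using cfv_prefix_chain_converges[of CS] prefix_sh_state(2)[OF a] len degs
    unfolding CS_def by blast
  have approx: "fls_agree (int n) (a - cfv (CS n)) (cfv (BS n))" for n
    using cf_prefix_agree[OF fls_small_minus_cfv[OF a degs(2)[of n]] pre[of n]]
      deg_sum_ge_length[OF degs(1)[of n]]
    by (auto simp: len elim: fls_agree_mono)
  have "fls_agree (int n) a (LB + LC)" for n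
  proof -
    have "fls_agree (int n) (a - cfv (CS n) + cfv (CS n)) (cfv (BS n) + LC)"
      using fls_agree_add[OF approx LC(1)[rule_format]] .
    moreover have "fls_agree (int n) (cfv (BS n) + LC) (LB + LC)"
      using fls_agree_add[OF LB(1)[rule_format] fls_agree_refl] .
    ultimately show ?thesis by (simp add: fls_agree_trans)
  qed
  then have "a = LB + LC" by (rule fls_eq_if_agree_all)
  moreover have "b_defined a n \<and> c_defined a n" for n
    unfolding b_defined_def c_defined_def using len unfolding BS_def CS_def by (metis order_refl)
  ultimately show ?thesis using LB(2) LC(2) limI unfolding bcf ccf convergent_def by metis
qed

lemma sh_stop_output:
  assumes a: "fls_small a" and st: "sh_stops a"
  shows "a = sh_beta a + sh_gamma a \<and> is_ratfun (sh_beta a) \<and> is_ratfun (sh_gamma a)"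
proof -
  define k where "k = (SOME k. \<exists>bs cs. sh_state a k = Stop bs cs)"
  have "\<exists>bs cs. sh_state a k = Stop bs cs"
    unfolding k_def by (rule someI_ex) (use st in \<open>auto simp: sh_stops_def\<close>)
  then obtain bs cs where bc: "sh_state a k = Stop bs cs" by blast
  have out: "sh_beta a = cfv bs" "sh_gamma a = cfv cs"
    unfolding sh_beta_def sh_gamma_def using st bc k_def[symmetric] by simp_all
  from a show ?thesis
  proof (cases rule: sh_state_cases[where k = k])
    case (stop bs' cs' bs0)
    then show ?thesis using bc out is_ratfun_cfv by (auto simp: sh_inv_def)
  qed (simp add: bc)
qed

lemma sh_inv_rational_bound:
  assumes a: "fls_small a" and inv: "sh_inv a bs cs" and q: "q \<noteq> 0"
    and aq: "a = poly_fls p / poly_fls q"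
  shows "2 * length cs \<le> degree q"
proof (cases "cs = []")
  case False
  then obtain cs0 c where cs: "cs = cs0 @ [c]" by (metis rev_exhaust)
  have degs: "\<forall>x\<in>set bs. degree x \<ge> 1" "\<forall>x\<in>set cs. degree x \<ge> 1"
    and pre: "cf_prefix (a - cfv bs) cs"
    and gap: "2 * int (deg_sum cs) - 2 * int (deg_sum bs) \<ge> 4 * int (length cs)"
    using inv unfolding sh_inv_def by auto
  define e where "e = a - cfv bs - cfv cs0"
  have e: "e \<noteq> 0" "fls_subdegree e = 2 * int (deg_sum cs0) + int (degree c)"
    using cf_prefix_snoc_error[OF fls_small_minus_cfv[OF a degs(1)] pre[unfolded cs]] by (auto simp: e_def)
  obtain P Q where PQ: "Q \<noteq> 0" "degree Q = deg_sum bs" "cfv bs * poly_fls Q = poly_fls P"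
    using cfv_eq_poly_fraction[OF degs(1)] by blast
  obtain P' R where PR: "R \<noteq> 0" "degree R = deg_sum cs0" "cfv cs0 * poly_fls R = poly_fls P'"
    using cfv_eq_poly_fraction[of cs0] degs(2) cs by auto
  txt \<open>The nonzero error \<open>e\<close> has a polynomial multiple, which bounds its degree.\<close>
  define N where "N = p * Q * R - P * q * R - P' * q * Q"
  have "e * poly_fls (q * Q * R) = (a * poly_fls q) * poly_fls Q * poly_fls R
      - (cfv bs * poly_fls Q) * poly_fls q * poly_fls R - (cfv cs0 * poly_fls R) * poly_fls q * poly_fls Q"
    by (simp add: e_def poly_fls_mult algebra_simps)
  also have "\<dots> = poly_fls N"
    using aq q unfolding PQ(3) PR(3) N_def by (simp add: poly_fls_mult poly_fls_diff)
  finally have eN: "e * poly_fls (q * Q * R) = poly_fls N" .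
  have qQR: "q * Q * R \<noteq> 0" "degree (q * Q * R) = degree q + deg_sum bs + deg_sum cs0"
    using q PQ PR by (simp_all add: degree_mult_eq)
  then have "N \<noteq> 0" using eN e by (metis mult_eq_0_iff poly_fls_eq_0_iff)
  have "fls_subdegree e - int (degree (q * Q * R)) = fls_subdegree (poly_fls N)"
    unfolding eN[symmetric] using e qQR by (simp add: fls_subdegree_poly_fls)
  also have "\<dots> \<le> 0" using \<open>N \<noteq> 0\<close> by (simp add: fls_subdegree_poly_fls)
  finally show ?thesis using gap e qQR cs by simp
qed simp

lemma sh_rational_stops:
  assumes a: "fls_small a" and q: "q \<noteq> 0" and aq: "a = poly_fls p / poly_fls q"
  obtains k bs cs where "sh_state a k = Stop bs cs" "2 * length cs \<le> degree q"
proof -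
  have "sh_stops a"
  proof (rule ccontr)
    assume ns: "\<not> sh_stops a"
    from a show False
    proof (cases rule: sh_state_cases[where k = "Suc (degree q)"])
      case (run bs cs)
      then show False using sh_inv_rational_bound[OF a run(3) q aq] unfolding sh_inv_def by simp
    qed (use ns in \<open>auto simp: sh_stops_def\<close>)
  qed
  then obtain k bs cs where st: "sh_state a k = Stop bs cs" unfolding sh_stops_def by blast
  from a show ?thesis
  proof (cases rule: sh_state_cases[where k = k])
    case (stop bs' cs' bs0)
    then show ?thesis using that st sh_inv_rational_bound[OF a stop(6) q aq] by simp
  qed (simp add: st)
qed

theorem theorem4p3:
  fixes \<alpha> :: "'a::field fls"
  assumes a0: "fls_polypart \<alpha> = 0"
  shows
    "(\<forall>k. sh_state \<alpha> k \<noteq> Fail)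
   \<and> (\<not> sh_stops \<alpha> \<longrightarrow> (\<forall>n. b_defined \<alpha> n \<and> c_defined \<alpha> n)
        \<and> convergent (sh_bcf \<alpha>) \<and> convergent (sh_ccf \<alpha>))
   \<and> \<alpha> = sh_beta \<alpha> + sh_gamma \<alpha>
   \<and> (\<forall>n\<ge>1. b_defined \<alpha> n \<longrightarrow>
        (\<forall>i. 1 \<le> i \<and> i \<le> n - 1 \<longrightarrow> cfq (\<alpha> - sh_bcf \<alpha> n) i = Some (sh_c \<alpha> i)))
   \<and> (\<forall>n\<ge>1. c_defined \<alpha> n \<longrightarrow>
        (\<forall>i. 1 \<le> i \<and> i \<le> n \<longrightarrow> cfq (\<alpha> - sh_ccf \<alpha> n) i = Some (sh_b \<alpha> i)
                                \<and> cfq (\<alpha> - sh_bcf \<alpha> n) i = Some (sh_c \<alpha> i)))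
   \<and> (c_defined \<alpha> 1 \<longrightarrow> degree (sh_c \<alpha> 1) \<ge> 2 * degree (sh_b \<alpha> 1) + 1)
   \<and> (\<forall>n\<ge>2. (b_defined \<alpha> n \<longrightarrow> degree (sh_b \<alpha> n) \<ge> degree (sh_c \<alpha> (n - 1)) + 2)
           \<and> (c_defined \<alpha> n \<longrightarrow> degree (sh_c \<alpha> n) \<ge> degree (sh_b \<alpha> n) + 2))
   \<and> (\<forall>p q. q \<noteq> 0 \<and> \<alpha> = poly_fls p / poly_fls q \<longrightarrow>
        (\<exists>k bs cs. sh_state \<alpha> k = Stop bs cs \<and> 2 * length cs \<le> degree q)
        \<and> is_ratfun (sh_beta \<alpha>) \<and> is_ratfun (sh_gamma \<alpha>))"
proof -
  have a: "fls_small \<alpha>" using a0 by (simp add: fls_polypart_eq_0_iff)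
  have sum: "\<alpha> = sh_beta \<alpha> + sh_gamma \<alpha>"
    using sh_stop_output[OF a] sh_nonstop[OF a] by (cases "sh_stops \<alpha>") (auto simp: sh_beta_def sh_gamma_def)
  have rational: "(\<exists>k bs cs. sh_state \<alpha> k = Stop bs cs \<and> 2 * length cs \<le> degree q)
      \<and> is_ratfun (sh_beta \<alpha>) \<and> is_ratfun (sh_gamma \<alpha>)"
    if q: "q \<noteq> 0" and aq: "\<alpha> = poly_fls p / poly_fls q" for p q
  proof -
    obtain k bs cs where "sh_state \<alpha> k = Stop bs cs" "2 * length cs \<le> degree q"
      using sh_rational_stops[OF a q aq] .
    then show ?thesis using sh_stop_output[OF a] unfolding sh_stops_def by blast
  qed
  show ?thesis
    using sh_state_not_Fail[OF a] sh_nonstop[OF a] sum sh_b_properties[OF a] sh_c_properties[OF a]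
      sh_c_properties(3)[OF a, of 1] rational
    by simp
qed

end
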